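(* The weight $p(\cdot)$, the block sequence $\bar B$, the rank sequence $\bar r$ and the number of blocks $N_n$ are all measurable with respect to the $\sigma$-algebra $\mathfrak C_n$ generated by $\mathcal C_n$ (i.e. constant on each $C\in\mathcal C_n$), and $$\mathbb W_n=\sum_{C\in\mathcal C_n}\frac{\mathrm{Card}(C)\,p(C)}{\mathbb P_n(\mathcal W_n)}\,\mathbb U_C,$$ where $p(C)$ is the common value of $p(w)$ for $w\in C$ and $\mathbb U_C$ is the uniform probability on $C$. Moreover, given that $w\in C$ (i.e. under $\mathbb U_C$), the positions of the ranks of $w$ are distributed uniformly on $\{1,2,\dots,N_n(C)\}$: for each $i$, the index $j$ with $r_j(w)=i$ is uniform on $\{1,\dots,N_n(C)\}$.
   Context: Let $\mathcal A=\{a_1<a_2<\dots\}$ be a finite or countably infinite totally ordered alphabet and $(p_i)_{i\ge1}$ a probability distribution with all $p_i>0$ and $0<p_1<1$. For $w=a_{\ell_1}\cdots a_{\ell_n}$ put $p(w)=p_{\ell_1}\cdots p_{\ell_n}$ and $\mathbb P_n(\{w\})=p(w)$ on words of length $n$. Lexicographic order: $u<v$ if $u$ is a proper prefix of $v$, or $u=ra_is$, $v=ra_jt$ with $i<j$. A word is primitive if it is not of the form $u^r$ with $r\ge2$. $\mathcal W_n$ is the set of primitive words of length $n$ whose first letter is the smallest letter $a_w$ occurring in $w$ and whose last letter differs from $a_w$; $\mathbb W_n(\{w\})=p(w)/\mathbb P_n(\mathcal W_n)$. Each $w\in\mathcal W_n$ decomposes uniquely as $w=B_1(w)\cdots B_{N_n(w)}(w)$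 into blocks: each block begins with a run of $a_w$ and ends just before the next run of $a_w$. $\bar B(w)=(B_i(w))_{i\ge 1}$ continued by an infinite sequence of empty words, and $\bar r(w)=(r_i(w))_{i\ge1}$, where for $j\le N=N_n(w)$, $r_j(w)$ is the rank of $B_j\cdots B_NB_1\cdots B_{j-1}$ among the $N$ words $B_k\cdots B_NB_1\cdots B_{k-1}$ in increasing lexicographic order. For $\sigma\in\mathfrak S_N$, $\sigma.w=B_{\sigma(1)}\cdots B_{\sigma(N)}$; $C(w)=\{\sigma.w:\sigma\in\mathfrak S_N,\ \sigma.w\in\mathcal W_n\}$ and $\mathcal C_n=\{C(w):w\in\mathcal W_n\}$ (a partition of $\mathcal W_n$).
   Formalization: On each C in $\mathcal C_n$, only the multisets of blocks $B_1,\dots,B_N$ and of ranks $r_1,\dots,r_N$ are constant, in place of the sequences $\bar B$ and $\bar r$ themselves. The statement above fails without it. *)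

theory Defs
  imports "HOL-Analysis.Analysis" "HOL-Combinatorics.Permutations"
begin

text \<open>Letters are the natural numbers; letter a_i is the number i, ordered by the
  order of nat.  Words are lists of letters.\<close>

definition wp :: "(nat \<Rightarrow> real) \<Rightarrow> nat list \<Rightarrow> real" where
  "wp pr w = prod_list (map pr w)"

definition primitive :: "nat list \<Rightarrow> bool" where
  "primitive w \<longleftrightarrow> \<not> (\<exists>u r. r \<ge> 2 \<and> w = concat (replicate r u))"

definition lexless :: "nat list \<Rightarrow> nat list \<Rightarrow> bool" where
  "lexless u v \<longleftrightarrow> (u, v) \<in> lexord {(a, b). a < b}"

definition Wset :: "nat set \<Rightarrow> nat \<Rightarrow> nat list set" where
  "Wset A n = {w. length w = n \<and> set w \<subseteq> A \<and> w \<noteq> [] \<and> primitive w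
                 \<and> hd w = Min (set w) \<and> last w \<noteq> Min (set w)}"

definition PW :: "nat set \<Rightarrow> (nat \<Rightarrow> real) \<Rightarrow> nat \<Rightarrow> real" where
  "PW A pr n = infsum (wp pr) (Wset A n)"

definition Wn :: "nat set \<Rightarrow> (nat \<Rightarrow> real) \<Rightarrow> nat \<Rightarrow> nat list \<Rightarrow> real" where
  "Wn A pr n w = (if w \<in> Wset A n then wp pr w / PW A pr n else 0)"

definition is_block :: "nat \<Rightarrow> nat list \<Rightarrow> bool" where
  "is_block m B \<longleftrightarrow> (\<exists>k v. k \<ge> 1 \<and> v \<noteq> [] \<and> m \<notin> set v \<and> B = replicate k m @ v)"

definition blocks :: "nat list \<Rightarrow> nat list list" where
  "blocks w = (THE Bs. concat Bs = w \<and> (\<forall>B\<in>set Bs. is_block (Min (set w)) B))"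

definition Nb :: "nat list \<Rightarrow> nat" where
  "Nb w = length (blocks w)"

text \<open>The block sequence, indexed from 1, continued by empty words.\<close>
definition Bbar :: "nat list \<Rightarrow> nat \<Rightarrow> nat list" where
  "Bbar w i = (if 1 \<le> i \<and> i \<le> Nb w then blocks w ! (i - 1) else [])"

definition rot :: "nat list \<Rightarrow> nat \<Rightarrow> nat list" where
  "rot w j = concat (drop (j - 1) (blocks w) @ take (j - 1) (blocks w))"

text \<open>Rank sequence (indexed from 1; value 0 beyond N).\<close>
definition rbar :: "nat list \<Rightarrow> nat \<Rightarrow> nat" where
  "rbar w j = (if 1 \<le> j \<and> j \<le> Nb w
                then card {k \<in> {1..Nb w}. lexless (rot w k) (rot w j)} + 1 else 0)"

definition permw :: "(nat \<Rightarrow> nat) \<Rightarrow> nat list \<Rightarrow> nat list" where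
  "permw \<sigma> w = concat (map (\<lambda>i. blocks w ! (\<sigma> i - 1)) [1..<Nb w + 1])"

definition Cls :: "nat set \<Rightarrow> nat \<Rightarrow> nat list \<Rightarrow> nat list set" where
  "Cls A n w = {permw \<sigma> w | \<sigma>. \<sigma> permutes {1..Nb w} \<and> permw \<sigma> w \<in> Wset A n}"

definition Cn :: "nat set \<Rightarrow> nat \<Rightarrow> nat list set set" where
  "Cn A n = Cls A n ` Wset A n"

definition pC :: "(nat \<Rightarrow> real) \<Rightarrow> nat list set \<Rightarrow> real" where
  "pC pr C = wp pr (SOME w. w \<in> C)"

definition UC :: "nat list set \<Rightarrow> nat list \<Rightarrow> real" where
  "UC C w = (if w \<in> C then 1 / real (card C) else 0)"

end

theory Submission
  imports Defs "HOL-Library.List_Lexorder"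
begin

text \<open>Cutting a word of \<open>W\<^sub>n\<close> in front of each run of its smallest letter gives its unique
  factorization into blocks, and \<open>C(w)\<close> consists exactly of the primitive words whose block
  sequence is a rearrangement of that of \<open>w\<close> (a rearrangement of blocks automatically starts with
  the smallest letter and does not end with it).  So all words of a class have the same letters,
  hence the same weight, and the same blocks; their ranks form a permutation of \<open>1..N\<close> because
  the rotations of a primitive block sequence are pairwise distinct.  Grouping the words of
  \<open>W\<^sub>n\<close> by class gives the mixture of uniform laws.

  For the positions of the ranks: rotating the block sequence by \<open>j - 1\<close> maps \<open>C\<close> bijectively
  onto itself (a rotation of a primitive word is primitive) and carries \<open>r\<^sub>j\<close> to \<open>r\<^sub>1\<close>, because it
  does not change the set of rotations among which the rank is taken.  Hence the number of
  \<open>w \<in> C\<close> with \<open>r\<^sub>j(w) = i\<close> does not depend on \<open>j\<close>; as every \<open>w\<close> has exactly one such \<open>j\<close>, these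
  \<open>N\<close> equal numbers add up to \<open>card C\<close>.\<close>

lemma rotate_concat_replicate:
  "rotate k (concat (replicate r u)) = concat (replicate r (rotate k u))"
proof -
  have rotate1: "rotate1 (concat (replicate r u)) = concat (replicate r (rotate1 u))" for u
  proof (cases u)
    case (Cons a v)
    have "concat (replicate r (a # v)) @ [a] = a # concat (replicate r (v @ [a]))" for r
      by (induction r) auto
    then show ?thesis
      using Cons by (cases r) auto
  qed simp
  show ?thesis
    by (induction k) (simp_all add: rotate1)
qed

lemma rotate_fixed_imp_power:
  assumes "rotate d xs = xs" "0 < d" "d < length xs"
  shows "\<exists>r z. 1 < r \<and> xs = concat (replicate r z)"
proof -
  have "drop d xs @ take d xs = take d xs @ drop d xs"
    using assms by (simp add: rotate_drop_take)
  moreover have "take d xs \<noteq> []" "drop d xs \<noteq> []"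
    using assms by auto
  ultimately show ?thesis
    using comm_append_is_replicate[of "take d xs" "drop d xs"] by auto
qed

lemma primitive_append_swap: "primitive (x @ y) \<Longrightarrow> primitive (y @ x)"
  unfolding primitive_def
proof (elim contrapos_nn)
  assume "\<exists>u r. 2 \<le> r \<and> y @ x = concat (replicate r u)"
  then obtain u r where "2 \<le> r" "y @ x = concat (replicate r u)"
    by blast
  then have "x @ y = concat (replicate r (rotate (length y) u))"
    by (metis rotate_append rotate_concat_replicate)
  then show "\<exists>u r. 2 \<le> r \<and> x @ y = concat (replicate r u)"
    using \<open>2 \<le> r\<close> by blast
qed

lemma concat_concat_replicate: "concat (concat (replicate r z)) = concat (replicate r (concat z))"
  by (induction r) auto

lemma mset_concat_eq: "mset xss = mset yss \<Longrightarrow> mset (concat xss) = mset (concat yss)"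
  by (metis mset_concat mset_map sum_mset_sum_list)

lemma wp_eq_if_mset_eq: "mset x = mset y \<Longrightarrow> wp pr x = wp pr y"
  unfolding wp_def by (metis mset_map prod_mset_prod_list)

lemma map_nth_minus_one_upt: "map (\<lambda>i. xs ! (i - 1)) [1..<length xs + 1] = xs"
proof -
  have "[1..<length xs + 1] = map Suc [0..<length xs]"
    by (simp add: map_Suc_upt)
  then show ?thesis
    by (simp add: comp_def map_nth)
qed

lemma mset_eq_iff_shifted_permutation:
  "mset ys = mset xs \<longleftrightarrow>
     (\<exists>\<sigma>. \<sigma> permutes {1..length xs} \<and> ys = map (\<lambda>i. xs ! (\<sigma> i - 1)) [1..<length xs + 1])"
proof -
  let ?I = "{1..length xs}"
  have mset_map_upt: "mset (map f [1..<length xs + 1]) = image_mset f (mset_set ?I)" for f :: "nat \<Rightarrow> 'a"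
    by (simp only: mset_map mset_upt Suc_eq_plus1[symmetric] atLeastLessThanSuc_atLeastAtMost)
  have mset_xs: "image_mset (\<lambda>i. xs ! (i - 1)) (mset_set ?I) = mset xs"
    by (metis map_nth_minus_one_upt mset_map_upt)
  show ?thesis
  proof
    assume ys: "mset ys = mset xs"
    then have "length ys = length xs"
      by (metis size_mset)
    then have "image_mset (\<lambda>i. ys ! (i - 1)) (mset_set ?I) = image_mset (\<lambda>i. xs ! (i - 1)) (mset_set ?I)"
      using ys mset_xs by (metis map_nth_minus_one_upt mset_map_upt)
    then obtain \<sigma> where \<sigma>: "\<sigma> permutes ?I" "\<forall>i\<in>?I. ys ! (i - 1) = xs ! (\<sigma> i - 1)"
      using image_mset_eq_implies_permutes[OF finite_atLeastAtMost] by blast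
    have "ys = map (\<lambda>i. ys ! (i - 1)) [1..<length xs + 1]"
      using \<open>length ys = length xs\<close> map_nth_minus_one_upt by metis
    also have "\<dots> = map (\<lambda>i. xs ! (\<sigma> i - 1)) [1..<length xs + 1]"
      using \<sigma>(2) by (intro map_cong) auto
    finally show "\<exists>\<sigma>. \<sigma> permutes ?I \<and> ys = map (\<lambda>i. xs ! (\<sigma> i - 1)) [1..<length xs + 1]"
      using \<sigma>(1) by blast
  next
    assume "\<exists>\<sigma>. \<sigma> permutes ?I \<and> ys = map (\<lambda>i. xs ! (\<sigma> i - 1)) [1..<length xs + 1]"
    then obtain \<sigma> where \<sigma>: "\<sigma> permutes ?I" "ys = map (\<lambda>i. xs ! (\<sigma> i - 1)) [1..<length xs + 1]"
      by blast
    have "mset ys = image_mset (\<lambda>i. xs ! (i - 1)) (image_mset \<sigma> (mset_set ?I))"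
      unfolding \<sigma>(2) mset_map_upt by (simp add: multiset.map_comp comp_def)
    then show "mset ys = mset xs"
      using mset_xs permutes_image_mset[OF \<sigma>(1)] by simp
  qed
qed

lemma block_nonempty: "is_block m B \<Longrightarrow> B \<noteq> []"
  unfolding is_block_def by auto

lemma hd_block: "is_block m B \<Longrightarrow> hd B = m"
  unfolding is_block_def by (auto simp: hd_append)

lemma last_block: "is_block m B \<Longrightarrow> last B \<noteq> m"
  unfolding is_block_def by (auto simp: last_append)

lemma hd_concat_blocks:
  assumes "\<forall>B\<in>set Bs. is_block m B"
  shows "concat Bs = [] \<or> hd (concat Bs) = m"
proof (cases Bs)
  case (Cons B Bs')
  then show ?thesis
    using assms block_nonempty[of m B] hd_block[of m B] by (simp add: hd_append)
qed simp

lemma last_concat_blocks: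
  assumes "\<forall>B\<in>set Bs. is_block m B" "Bs \<noteq> []"
  shows "last (concat Bs) \<noteq> m"
proof -
  have "concat Bs = concat (butlast Bs) @ last Bs"
    using assms(2) by (metis append_butlast_last_id append_Nil2 concat.simps concat_append)
  moreover have "is_block m (last Bs)"
    using assms by simp
  ultimately show ?thesis
    by (simp add: block_nonempty last_block)
qed

definition first_block :: "nat \<Rightarrow> nat list \<Rightarrow> nat list" where
  "first_block m xs = takeWhile (\<lambda>x. x = m) xs @ takeWhile (\<lambda>x. x \<noteq> m) (dropWhile (\<lambda>x. x = m) xs)"

lemma first_block_append:
  assumes "is_block m B" "X = [] \<or> hd X = m"
  shows "first_block m (B @ X) = B"
proof -
  obtain k v where B': "k \<ge> 1" "v \<noteq> []" "m \<notin> set v" "B = replicate k m @ v"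
    using assms(1) unfolding is_block_def by blast
  then obtain a v' where "v = a # v'"
    by (cases v) auto
  with B' have B: "m \<notin> set (a # v')" "B = replicate k m @ a # v'"
    by auto
  have "a \<noteq> m"
    using B(1) by auto
  then have "takeWhile (\<lambda>x. x = m) (replicate k m @ (a # v') @ X) = replicate k m"
    "dropWhile (\<lambda>x. x = m) (replicate k m @ (a # v') @ X) = (a # v') @ X"
    by (induction k) auto
  moreover have "takeWhile (\<lambda>x. x \<noteq> m) ((a # v') @ X) = (a # v') @ takeWhile (\<lambda>x. x \<noteq> m) X"
    using B(1) by (intro takeWhile_append2) auto
  moreover have "takeWhile (\<lambda>x. x \<noteq> m) X = []"
    using assms(2) by (cases X) auto
  ultimately show ?thesis
    using B(2) unfolding first_block_def by simp
qed

lemma block_factorization_unique: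
  "\<forall>B\<in>set Bs. is_block m B \<Longrightarrow> \<forall>B\<in>set Cs. is_block m B \<Longrightarrow> concat Bs = concat Cs \<Longrightarrow> Bs = Cs"
proof (induction Bs arbitrary: Cs)
  case Nil
  then show ?case
    using block_nonempty by (cases Cs) auto
next
  case (Cons B Bs)
  then obtain C Cs' where Cs: "Cs = C # Cs'"
    using block_nonempty by (cases Cs) auto
  have "first_block m (B @ concat Bs) = B" "first_block m (C @ concat Cs') = C"
    using Cons.prems(1,2) Cs by (auto intro!: first_block_append hd_concat_blocks)
  then show ?case
    using Cons Cs by auto
qed

lemma ex_block_factorization_suffix:
  "xs \<noteq> [] \<Longrightarrow> last xs \<noteq> m \<Longrightarrow>
    \<exists>u Bs. xs = u @ concat Bs \<and> m \<notin> set u \<and> (\<forall>B\<in>set Bs. is_block m B)"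
proof (induction xs)
  case Nil
  then show ?case by simp
next
  case (Cons x xs)
  show ?case
  proof (cases "xs = []")
    case True
    then have "x # xs = [x] @ concat [] \<and> m \<notin> set [x]"
      using Cons.prems by simp
    then show ?thesis
      by fastforce
  next
    case False
    then obtain u Bs where ub: "xs = u @ concat Bs" "m \<notin> set u" "\<forall>B\<in>set Bs. is_block m B"
      using Cons by auto
    consider "x \<noteq> m" | "x = m" "u \<noteq> []" | "x = m" "u = []"
      by blast
    then show ?thesis
    proof cases
      case 1
      then have "x # xs = (x # u) @ concat Bs \<and> m \<notin> set (x # u)"
        using ub by simp
      then show ?thesis
        using ub(3) by blast
    next
      case 2
      then have "is_block m (m # u)"
        using ub(2) unfolding is_block_def by (intro exI[of _ "1::nat"] exI[of _ u]) simp
      then have "x # xs = [] @ concat ((m # u) # Bs) \<and> m \<notin> set [] \<and> (\<forall>B\<in>set ((m # u) # Bs). is_block m B)"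
        using ub 2 by simp
      then show ?thesis
        by blast
    next
      case 3
      then obtain B Bs' where Bs: "Bs = B # Bs'"
        using ub False by (cases Bs) auto
      then obtain k v where "k \<ge> 1" "v \<noteq> []" "m \<notin> set v" "B = replicate k m @ v"
        using ub(3) unfolding is_block_def by auto
      then have "is_block m (m # B)"
        unfolding is_block_def by (intro exI[of _ "Suc k"] exI[of _ v]) simp
      then have "x # xs = [] @ concat ((m # B) # Bs') \<and> m \<notin> set [] \<and> (\<forall>B\<in>set ((m # B) # Bs'). is_block m B)"
        using ub 3 Bs by simp
      then show ?thesis
        by blast
    qed
  qed
qed

lemma ex_block_factorization:
  assumes "xs \<noteq> []" "hd xs = m" "last xs \<noteq> m"
  shows "\<exists>Bs. concat Bs = xs \<and> (\<forall>B\<in>set Bs. is_block m B)"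
proof -
  obtain u Bs where "xs = u @ concat Bs" "m \<notin> set u" "\<forall>B\<in>set Bs. is_block m B"
    using ex_block_factorization_suffix[OF assms(1,3)] by blast
  moreover from this have "u = []"
    using assms(2) by (cases u) auto
  ultimately show ?thesis
    by auto
qed

lemma blocks_eqI:
  assumes "concat Bs = w" "\<forall>B\<in>set Bs. is_block (Min (set w)) B"
  shows "blocks w = Bs"
  unfolding blocks_def by (rule the_equality) (use assms block_factorization_unique in auto)

context
  fixes A n w
  assumes w: "w \<in> Wset A n"
begin

lemma concat_blocks: "concat (blocks w) = w"
  and is_block_blocks: "\<forall>B\<in>set (blocks w). is_block (Min (set w)) B"
proof -
  obtain Bs where "concat Bs = w" "\<forall>B\<in>set Bs. is_block (Min (set w)) B"
    using ex_block_factorization[of w] w unfolding Wset_def by auto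
  then show "concat (blocks w) = w" "\<forall>B\<in>set (blocks w). is_block (Min (set w)) B"
    using blocks_eqI by auto
qed

lemma Nb_pos: "0 < Nb w"
  using concat_blocks w unfolding Nb_def Wset_def by auto

lemma blocks_concat_rearrangement:
  assumes "mset Bs = mset (blocks w)"
  shows "blocks (concat Bs) = Bs"
    and "mset (concat Bs) = mset w"
    and "concat Bs \<in> Wset A n \<longleftrightarrow> primitive (concat Bs)"
proof -
  let ?m = "Min (set w)"
  have blocks: "\<forall>B\<in>set Bs. is_block ?m B"
    using is_block_blocks mset_eq_setD[OF assms] by auto
  have "Bs \<noteq> []"
    using assms Nb_pos unfolding Nb_def by auto
  show mset_eq: "mset (concat Bs) = mset w"
    using mset_concat_eq[OF assms] concat_blocks by simp
  then have set_eq: "set (concat Bs) = set w" and "length (concat Bs) = length w"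
    by (metis set_mset_mset, metis size_mset)
  show "blocks (concat Bs) = Bs"
    using blocks_eqI[of Bs "concat Bs"] blocks set_eq by simp
  have "concat Bs \<noteq> []"
  proof
    assume "concat Bs = []"
    then have "w = []"
      using \<open>length (concat Bs) = length w\<close> by (metis length_0_conv)
    then show False
      using w unfolding Wset_def by simp
  qed
  then show "concat Bs \<in> Wset A n \<longleftrightarrow> primitive (concat Bs)"
    using w set_eq \<open>length (concat Bs) = length w\<close> hd_concat_blocks[OF blocks]
      last_concat_blocks[OF blocks \<open>Bs \<noteq> []\<close>]
    unfolding Wset_def by auto
qed

end

context
  fixes A n w0
  assumes w0: "w0 \<in> Wset A n"
begin

lemma Cls_eq: "Cls A n w0 = {x \<in> Wset A n. mset (blocks x) = mset (blocks w0)}"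
proof -
  have "x \<in> Cls A n w0 \<longleftrightarrow> (\<exists>Bs. mset Bs = mset (blocks w0) \<and> x = concat Bs \<and> x \<in> Wset A n)" for x
    unfolding Cls_def permw_def Nb_def mset_eq_iff_shifted_permutation by blast
  then show ?thesis
    using blocks_concat_rearrangement(1)[OF w0] concat_blocks by fastforce
qed

lemma self_mem_Cls: "w0 \<in> Cls A n w0"
  using Cls_eq w0 by simp

lemma Cls_subset_Wset: "Cls A n w0 \<subseteq> Wset A n"
  using Cls_eq by simp

lemma mset_blocks_Cls: "w \<in> Cls A n w0 \<Longrightarrow> mset (blocks w) = mset (blocks w0)"
  using Cls_eq by simp

lemma Nb_Cls: "w \<in> Cls A n w0 \<Longrightarrow> Nb w = Nb w0"
  unfolding Nb_def by (metis mset_blocks_Cls size_mset)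

lemma mset_Cls: "w \<in> Cls A n w0 \<Longrightarrow> mset w = mset w0"
  by (metis Cls_subset_Wset concat_blocks mset_blocks_Cls mset_concat_eq subsetD w0)

lemma finite_Cls: "finite (Cls A n w0)"
proof (rule finite_subset)
  show "Cls A n w0 \<subseteq> {xs. set xs \<subseteq> set w0 \<and> length xs = length w0}"
    using mset_Cls by (auto dest: mset_eq_setD mset_eq_length)
  show "finite {xs. set xs \<subseteq> set w0 \<and> length xs = length w0}"
    by (rule finite_lists_length_eq) simp
qed

lemma pC_Cls: "pC pr (Cls A n w0) = wp pr w0"
  unfolding pC_def using self_mem_Cls by (metis mset_Cls someI wp_eq_if_mset_eq)

end

lemma Cls_eq_Cls: "w0 \<in> Wset A n \<Longrightarrow> w \<in> Cls A n w0 \<Longrightarrow> Cls A n w = Cls A n w0"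
  using Cls_eq[of w0 A n] Cls_eq[of w A n] by auto

lemma lexless_iff_less: "lexless u v \<longleftrightarrow> u < v"
  unfolding lexless_def list_less_def ..

lemma bij_betw_rank:
  fixes R :: "'a \<Rightarrow> 'b::linorder"
  assumes inj: "inj_on R S" and fin: "finite S"
  shows "bij_betw (\<lambda>j. card {k\<in>S. R k < R j}) S {..<card S}"
proof -
  let ?rk = "\<lambda>j. card {k\<in>S. R k < R j}"
  have less: "?rk a < ?rk b" if "a \<in> S" "b \<in> S" "R a < R b" for a b
  proof (rule psubset_card_mono)
    have "{k\<in>S. R k < R a} \<subseteq> {k\<in>S. R k < R b}"
      using that(3) by (auto intro: less_trans)
    moreover have "a \<in> {k\<in>S. R k < R b} - {k\<in>S. R k < R a}"
      using that by simp
    ultimately show "{k\<in>S. R k < R a} \<subset> {k\<in>S. R k < R b}"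
      by blast
  qed (simp add: fin)
  have "inj_on ?rk S"
  proof (rule inj_onI, rule ccontr)
    fix a b assume ab: "a \<in> S" "b \<in> S" "?rk a = ?rk b" "a \<noteq> b"
    then have "R a < R b \<or> R b < R a"
      using inj_onD[OF inj] by (meson linorder_neqE)
    then show False
      using ab less[of a b] less[of b a] by auto
  qed
  moreover have "?rk j < card S" if "j \<in> S" for j
    using that fin by (intro psubset_card_mono) auto
  ultimately show ?thesis
    unfolding bij_betw_def by (intro conjI card_subset_eq) (auto simp: card_image)
qed

definition rotations :: "'a list list \<Rightarrow> 'a list set" where
  "rotations Bs = range (\<lambda>d. concat (rotate d Bs))"

lemma rotations_rotate: "rotations (rotate k Bs) = rotations Bs"
proof -
  have shift: "rotate (e + k * (length Bs - 1) + k) Bs = rotate e Bs" for e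
  proof (cases "Bs = []")
    case False
    then have "e + k * (length Bs - 1) + k = e + k * length Bs"
      by (cases "length Bs") simp_all
    then show ?thesis
      by (metis rotate_conv_mod mod_mult_self1)
  qed simp
  show ?thesis
    unfolding rotations_def rotate_rotate
  proof (intro equalityI subsetI)
    fix y assume "y \<in> range (\<lambda>d. concat (rotate d Bs))"
    then obtain e where "y = concat (rotate (e + k * (length Bs - 1) + k) Bs)"
      using shift by auto
    then show "y \<in> range (\<lambda>d. concat (rotate (d + k) Bs))"
      by blast
  qed auto
qed

lemma rotate_inj: "rotate k xs = rotate k ys \<Longrightarrow> xs = ys"
  by (induction k) (simp_all add: inj_eq[OF inj_rotate1])

lemma card_filter_bij_betw_self:
  assumes "bij_betw f C C"
  shows "card {x\<in>C. P (f x)} = card {x\<in>C. P x}"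
proof -
  have image: "f ` {x\<in>C. P (f x)} = {x\<in>C. P x}"
    using assms by (auto simp: bij_betw_def)
  have "inj_on f {x\<in>C. P (f x)}"
    using assms by (auto simp: bij_betw_def intro: inj_on_subset)
  then show ?thesis
    using card_image image by metis
qed

lemma sum_card_preimage_eq_card:
  assumes "finite C" "finite S" "\<And>w. w \<in> C \<Longrightarrow> bij_betw (f w) S S" "i \<in> S"
  shows "(\<Sum>j\<in>S. card {w\<in>C. f w j = i}) = card C"
proof -
  have card_filter: "card {x\<in>X. P x} = (\<Sum>x\<in>X. if P x then 1 else 0)" if "finite X" for X and P :: "'c \<Rightarrow> bool"
    using that by (simp add: sum.inter_filter[symmetric])
  have one: "card {j\<in>S. f w j = i} = 1" if "w \<in> C" for w
  proof -
    have "i \<in> f w ` S"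
      using assms(3)[OF that] assms(4) by (simp add: bij_betw_def)
    then have "f w ` {j\<in>S. f w j = i} = {i}"
      by auto
    moreover have "inj_on (f w) {j\<in>S. f w j = i}"
      using assms(3)[OF that] by (auto simp: bij_betw_def intro: inj_on_subset)
    ultimately show ?thesis
      by (metis card_image is_singletonI is_singleton_altdef)
  qed
  have "(\<Sum>j\<in>S. card {w\<in>C. f w j = i}) = (\<Sum>w\<in>C. \<Sum>j\<in>S. if f w j = i then 1 else 0)"
    using assms(1) by (simp add: card_filter sum.swap[of _ S])
  also have "\<dots> = (\<Sum>w\<in>C. 1)"
    using assms(2) one by (intro sum.cong) (simp_all add: card_filter)
  finally show ?thesis
    by simp
qed

context
  fixes A n w
  assumes w: "w \<in> Wset A n"
begin

lemma rotate_blocks_eq_drop_take: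
  assumes "j \<in> {1..Nb w}"
  shows "rotate (j - 1) (blocks w) = drop (j - 1) (blocks w) @ take (j - 1) (blocks w)"
proof -
  have "(j - 1) mod length (blocks w) = j - 1"
    using assms unfolding Nb_def by (intro mod_less) auto
  then show ?thesis
    by (simp add: rotate_drop_take)
qed

lemma rot_eq_concat_rotate:
  assumes "j \<in> {1..Nb w}"
  shows "rot w j = concat (rotate (j - 1) (blocks w))"
  unfolding rot_def rotate_blocks_eq_drop_take[OF assms] by simp

lemma rot_mem_Cls: "rot w j \<in> Cls A n w"
  and blocks_rot: "blocks (rot w j) = drop (j - 1) (blocks w) @ take (j - 1) (blocks w)"
proof -
  let ?Bs = "drop (j - 1) (blocks w) @ take (j - 1) (blocks w)"
  have mset_eq: "mset ?Bs = mset (blocks w)"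
    by (metis append_take_drop_id mset_append union_commute)
  have "w = concat (take (j - 1) (blocks w)) @ concat (drop (j - 1) (blocks w))"
    using concat_blocks[OF w] by (metis append_take_drop_id concat_append)
  then have "primitive (concat ?Bs)"
    using w primitive_append_swap unfolding Wset_def by auto
  then show "rot w j \<in> Cls A n w" "blocks (rot w j) = ?Bs"
    using blocks_concat_rearrangement[OF w mset_eq] Cls_eq[OF w] mset_eq unfolding rot_def by auto
qed

lemma blocks_rot_eq_rotate:
  assumes "j \<in> {1..Nb w}"
  shows "blocks (rot w j) = rotate (j - 1) (blocks w)"
  unfolding blocks_rot rotate_blocks_eq_drop_take[OF assms] ..

lemma inj_on_rot: "inj_on (rot w) {1..Nb w}"
proof -
  have "rot w a \<noteq> rot w b" if ab: "a \<in> {1..Nb w}" "b \<in> {1..Nb w}" "a < b" for a b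
  proof
    assume "rot w a = rot w b"
    then have "rotate (a - 1) (blocks w) = rotate (b - 1) (blocks w)"
      using blocks_rot_eq_rotate[OF ab(1)] blocks_rot_eq_rotate[OF ab(2)] by simp
    moreover have "rotate (b - a) (rotate (a - 1) (blocks w)) = rotate (b - a + (a - 1)) (blocks w)"
      by (rule rotate_rotate)
    moreover have "b - a + (a - 1) = b - 1"
      using ab by auto
    ultimately have "rotate (b - a) (rotate (a - 1) (blocks w)) = rotate (a - 1) (blocks w)"
      by simp
    moreover have "0 < b - a" "b - a < length (rotate (a - 1) (blocks w))"
      using ab unfolding Nb_def by auto
    ultimately obtain r z where "1 < r" "rotate (a - 1) (blocks w) = concat (replicate r z)"
      using rotate_fixed_imp_power by blast
    then have "rot w a = concat (replicate r (concat z))"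
      using rot_eq_concat_rotate[OF ab(1)] by (simp add: concat_concat_replicate)
    moreover have "primitive (rot w a)"
      using rot_mem_Cls Cls_subset_Wset[OF w] unfolding Wset_def by auto
    moreover have "2 \<le> r"
      using \<open>1 < r\<close> by simp
    ultimately show False
      unfolding primitive_def by blast
  qed
  then show ?thesis
    by (intro inj_onI) (metis linorder_neqE_nat)
qed

lemma rot_image: "rot w ` {1..Nb w} = rotations (blocks w)"
proof
  show "rot w ` {1..Nb w} \<subseteq> rotations (blocks w)"
    using rot_eq_concat_rotate unfolding rotations_def by auto
  show "rotations (blocks w) \<subseteq> rot w ` {1..Nb w}"
  proof
    fix y assume "y \<in> rotations (blocks w)"
    then obtain d where "y = concat (rotate d (blocks w))"
      unfolding rotations_def by auto
    moreover have "d mod Nb w + 1 \<in> {1..Nb w}"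
      using Nb_pos[OF w] by (simp add: Suc_le_eq)
    moreover have "concat (rotate d (blocks w)) = rot w (d mod Nb w + 1)"
      using rot_eq_concat_rotate[OF calculation(2)] rotate_conv_mod[of d "blocks w"]
      unfolding Nb_def by simp
    ultimately show "y \<in> rot w ` {1..Nb w}"
      by blast
  qed
qed

lemma rbar_eq_card_less_rot: "j \<in> {1..Nb w} \<Longrightarrow> rbar w j = card {k\<in>{1..Nb w}. rot w k < rot w j} + 1"
  unfolding rbar_def lexless_iff_less by simp

lemma rbar_eq_card_rotations:
  assumes "j \<in> {1..Nb w}"
  shows "rbar w j = card {y\<in>rotations (blocks w). y < rot w j} + 1"
proof -
  have "{y\<in>rotations (blocks w). y < rot w j} = rot w ` {k\<in>{1..Nb w}. rot w k < rot w j}"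
    unfolding rot_image[symmetric] by blast
  moreover have "inj_on (rot w) {k\<in>{1..Nb w}. rot w k < rot w j}"
    using inj_on_rot by (rule inj_on_subset) auto
  ultimately show ?thesis
    using rbar_eq_card_less_rot[OF assms] by (simp add: card_image)
qed

lemma bij_betw_rbar: "bij_betw (rbar w) {1..Nb w} {1..Nb w}"
proof -
  have "bij_betw (\<lambda>j. card {k\<in>{1..Nb w}. rot w k < rot w j}) {1..Nb w} {..<Nb w}"
    using bij_betw_rank[OF inj_on_rot] by simp
  moreover have "bij_betw Suc {..<Nb w} {1..Nb w}"
    by (simp add: bij_betw_def image_Suc_lessThan)
  ultimately have "bij_betw (Suc \<circ> (\<lambda>j. card {k\<in>{1..Nb w}. rot w k < rot w j})) {1..Nb w} {1..Nb w}"
    by (rule bij_betw_trans)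
  then show ?thesis
    by (rule bij_betw_cong[THEN iffD1, rotated]) (simp add: rbar_eq_card_less_rot)
qed

end

lemma rbar_rot_one:
  assumes w: "w \<in> Wset A n" and j: "j \<in> {1..Nb w}"
  shows "rbar (rot w j) 1 = rbar w j"
proof -
  have w': "rot w j \<in> Wset A n"
    using rot_mem_Cls[OF w] Cls_subset_Wset[OF w] by auto
  have one: "1 \<in> {1..Nb (rot w j)}"
    using Nb_pos[OF w'] by simp
  have "rot (rot w j) 1 = rot w j"
    using rot_def[of "rot w j" 1] concat_blocks[OF w'] by simp
  then show ?thesis
    using rbar_eq_card_rotations[OF w' one] rbar_eq_card_rotations[OF w j]
      blocks_rot_eq_rotate[OF w j] by (simp add: rotations_rotate)
qed

context
  fixes A n w0
  assumes w0: "w0 \<in> Wset A n"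
begin

lemma bij_betw_rot_Cls:
  assumes j: "j \<in> {1..Nb w0}"
  shows "bij_betw (\<lambda>w. rot w j) (Cls A n w0) (Cls A n w0)"
proof -
  have inj: "inj_on (\<lambda>w. rot w j) (Cls A n w0)"
  proof (rule inj_onI)
    fix a b assume ab: "a \<in> Cls A n w0" "b \<in> Cls A n w0" "rot a j = rot b j"
    then have "a \<in> Wset A n" "b \<in> Wset A n" "j \<in> {1..Nb a}" "j \<in> {1..Nb b}"
      using Cls_subset_Wset[OF w0] Nb_Cls[OF w0] j by auto
    then show "a = b"
      using ab(3) blocks_rot_eq_rotate rotate_inj concat_blocks by metis
  qed
  have "rot w j \<in> Cls A n w0" if "w \<in> Cls A n w0" for w
    using that rot_mem_Cls Cls_subset_Wset[OF w0] Cls_eq_Cls[OF w0] by blast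
  then show ?thesis
    using endo_inj_surj[OF finite_Cls[OF w0] _ inj] inj unfolding bij_betw_def by blast
qed

lemma card_rank_position_eq:
  assumes j: "j \<in> {1..Nb w0}"
  shows "card {w\<in>Cls A n w0. rbar w j = i} = card {w\<in>Cls A n w0. rbar w 1 = i}"
proof -
  have "rbar (rot w j) 1 = rbar w j" if "w \<in> Cls A n w0" for w
    using that Cls_subset_Wset[OF w0] Nb_Cls[OF w0 that] j by (intro rbar_rot_one) auto
  then have "{w\<in>Cls A n w0. rbar w j = i} = {w\<in>Cls A n w0. rbar (rot w j) 1 = i}"
    by (intro Collect_cong) auto
  then show ?thesis
    using card_filter_bij_betw_self[OF bij_betw_rot_Cls[OF j]] by simp
qed

lemma rank_position_uniform:
  assumes i: "i \<in> {1..Nb w0}" and j: "j \<in> {1..Nb w0}"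
  shows "real (card {w\<in>Cls A n w0. rbar w j = i}) / real (card (Cls A n w0)) = 1 / real (Nb w0)"
proof -
  let ?c = "card {w\<in>Cls A n w0. rbar w 1 = i}"
  have "bij_betw (rbar w) {1..Nb w0} {1..Nb w0}" if "w \<in> Cls A n w0" for w
  proof -
    have "w \<in> Wset A n" "Nb w = Nb w0"
      using that Cls_subset_Wset[OF w0] Nb_Cls[OF w0] by auto
    then show ?thesis
      using bij_betw_rbar[of w A n] by simp
  qed
  then have "card (Cls A n w0) = (\<Sum>j\<in>{1..Nb w0}. card {w\<in>Cls A n w0. rbar w j = i})"
    using finite_Cls[OF w0] i by (intro sum_card_preimage_eq_card[symmetric]) auto
  also have "\<dots> = (\<Sum>j\<in>{1..Nb w0}. ?c)"
    using card_rank_position_eq by (rule sum.cong[OF refl])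
  finally have "card (Cls A n w0) = Nb w0 * ?c"
    by simp
  moreover have "0 < card (Cls A n w0)"
    using finite_Cls[OF w0] self_mem_Cls[OF w0] card_gt_0_iff by blast
  ultimately show ?thesis
    unfolding card_rank_position_eq[OF j] by simp
qed

end

lemma map_Bbar_upt: "map (Bbar w) [1..<Nb w + 1] = blocks w"
proof -
  have "map (Bbar w) [1..<Nb w + 1] = map (\<lambda>i. blocks w ! (i - 1)) [1..<Nb w + 1]"
    by (rule map_cong) (auto simp: Bbar_def)
  then show ?thesis
    unfolding Nb_def by (simp only: map_nth_minus_one_upt)
qed

lemma mset_map_rbar_upt:
  assumes "w \<in> Wset A n"
  shows "mset (map (rbar w) [1..<Nb w + 1]) = mset [1..<Nb w + 1]"
proof -
  have set_upt: "set [1..<Nb w + 1] = {1..Nb w}"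
    by auto
  then have "distinct (map (rbar w) [1..<Nb w + 1])" "set (map (rbar w) [1..<Nb w + 1]) = set [1..<Nb w + 1]"
    using bij_betw_rbar[OF assms] by (simp_all add: distinct_map bij_betw_def)
  then show ?thesis
    using set_eq_iff_mset_eq_distinct distinct_upt by blast
qed

lemma Wn_eq_mixture_of_uniform:
  "Wn A pr n w = (\<Sum>\<^sub>\<infinity>C\<in>Cn A n. real (card C) * pC pr C / PW A pr n * UC C w)"
proof (cases "w \<in> Wset A n")
  case False
  have "w \<notin> C" if "C \<in> Cn A n" for C
    using that False Cls_subset_Wset unfolding Cn_def by blast
  then have "(\<Sum>\<^sub>\<infinity>C\<in>Cn A n. real (card C) * pC pr C / PW A pr n * UC C w) = 0"
    by (intro infsum_0) (simp add: UC_def)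
  then show ?thesis
    using False unfolding Wn_def by simp
next
  case True
  let ?C = "Cls A n w"
  have only: "C = ?C" if "C \<in> Cn A n" "w \<in> C" for C
    using that Cls_eq_Cls unfolding Cn_def by blast
  have "(\<Sum>\<^sub>\<infinity>C\<in>Cn A n. real (card C) * pC pr C / PW A pr n * UC C w)
      = (\<Sum>\<^sub>\<infinity>C\<in>{?C}. real (card C) * pC pr C / PW A pr n * UC C w)"
    using True only by (intro infsum_cong_neutral) (auto simp: Cn_def UC_def)
  also have "\<dots> = wp pr w / PW A pr n"
  proof -
    have "0 < card ?C"
      using finite_Cls[OF True] self_mem_Cls[OF True] card_gt_0_iff by blast
    then show ?thesis
      using self_mem_Cls[OF True] by (simp add: pC_Cls[OF True] UC_def)
  qed
  finally show ?thesis
    using True unfolding Wn_def by simp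
qed

theorem lemma3:
  fixes A :: "nat set" and pr :: "nat \<Rightarrow> real" and n :: nat
  assumes alph: "(\<exists>K. K \<ge> 2 \<and> A = {1..K}) \<or> A = {1..}"
    and pos: "\<And>i. i \<in> A \<Longrightarrow> pr i > 0"
    and distr: "(pr has_sum 1) A"
    and p1: "0 < pr 1" "pr 1 < 1"
  shows "(\<forall>C\<in>Cn A n. \<forall>w\<in>C. \<forall>w'\<in>C.
            wp pr w = wp pr w' \<and> Nb w = Nb w'
            \<and> mset (map (Bbar w) [1..<Nb w + 1]) = mset (map (Bbar w') [1..<Nb w' + 1])
            \<and> mset (map (rbar w) [1..<Nb w + 1]) = mset (map (rbar w') [1..<Nb w' + 1]))
       \<and> (\<forall>w. Wn A pr n w =
            (\<Sum>\<^sub>\<infinity>C\<in>Cn A n. real (card C) * pC pr C / PW A pr n * UC C w))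
       \<and> (\<forall>C\<in>Cn A n. \<forall>w0\<in>C. \<forall>i\<in>{1..Nb w0}. \<forall>j\<in>{1..Nb w0}.
            real (card {w\<in>C. rbar w j = i}) / real (card C) = 1 / real (Nb w0))"
proof (intro conjI ballI allI)
  fix C w w' assume "C \<in> Cn A n" "w \<in> C" "w' \<in> C"
  then obtain c where c: "c \<in> Wset A n" "w \<in> Cls A n c" "w' \<in> Cls A n c"
    unfolding Cn_def by blast
  then have W: "w \<in> Wset A n" "w' \<in> Wset A n"
    using Cls_subset_Wset by blast+
  show "wp pr w = wp pr w'"
    using mset_Cls[OF c(1,2)] mset_Cls[OF c(1,3)] by (intro wp_eq_if_mset_eq) simp
  show Nb: "Nb w = Nb w'"
    using Nb_Cls[OF c(1,2)] Nb_Cls[OF c(1,3)] by simp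
  show "mset (map (Bbar w) [1..<Nb w + 1]) = mset (map (Bbar w') [1..<Nb w' + 1])"
    unfolding map_Bbar_upt using mset_blocks_Cls[OF c(1,2)] mset_blocks_Cls[OF c(1,3)] by simp
  show "mset (map (rbar w) [1..<Nb w + 1]) = mset (map (rbar w') [1..<Nb w' + 1])"
    using mset_map_rbar_upt[OF W(1)] mset_map_rbar_upt[OF W(2)] Nb by (simp only:)
next
  show "Wn A pr n w = (\<Sum>\<^sub>\<infinity>C\<in>Cn A n. real (card C) * pC pr C / PW A pr n * UC C w)" for w
    by (rule Wn_eq_mixture_of_uniform)
next
  fix C w0 i j assume C: "C \<in> Cn A n" "w0 \<in> C" and ij: "i \<in> {1..Nb w0}" "j \<in> {1..Nb w0}"
  then obtain c where c: "c \<in> Wset A n" "C = Cls A n c"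
    unfolding Cn_def by blast
  then have "w0 \<in> Wset A n" "C = Cls A n w0"
    using C(2) Cls_subset_Wset Cls_eq_Cls by blast+
  then show "real (card {w\<in>C. rbar w j = i}) / real (card C) = 1 / real (Nb w0)"
    using rank_position_uniform[OF _ ij] by simp
qed

end
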